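(* Let $\mathbb{X},\mathbb{Y}$ be finite-dimensional real Banach spaces, $T\in\mathbb{L}(\mathbb{X},\mathbb{Y})$, and let $F$ be a face of $B_{\mathbb{X}}$ with $T(F)\neq\{0\}$. Then $T$ preserves TEA pairs contained in $F$ (i.e. $(Tx,Ty)$ is a TEA pair in $\mathbb{Y}$ for all $x,y\in F$) if and only if there exists $u\in F$ such that $J(Tu)\subset J(Tv)$ for all $v\in F\setminus\ker T$.
   Context: A face of $B_{\mathbb{X}}$ is a nonempty convex subset $F\subset S_{\mathbb{X}}$ such that whenever $x_1,x_2\in S_{\mathbb{X}}$, $0<t<1$ and $(1-t)x_1+tx_2\in F$, then $x_1,x_2\in F$. For non-zero $y$, $J(y)=\{g\in S_{\mathbb{Y}^*}: g(y)=\|y\|\}$. $(x,y)$ is a TEA pair if $\|x+y\|=\|x\|+\|y\|$. *)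

theory Defs
  imports "HOL-Analysis.Analysis"
begin

text \<open>Finite-dimensional real normed space (automatically Banach).\<close>
definition fin_dim_space :: "'a::real_normed_vector itself \<Rightarrow> bool" where
  "fin_dim_space _ \<longleftrightarrow> (\<exists>B::'a set. finite B \<and> span B = UNIV)"

definition face_of_ball :: "'a::real_normed_vector set \<Rightarrow> bool" where
  "face_of_ball F \<longleftrightarrow> F \<noteq> {} \<and> convex F \<and> F \<subseteq> sphere 0 1 \<and>
     (\<forall>x1\<in>sphere 0 1. \<forall>x2\<in>sphere 0 1. \<forall>t. 0 < t \<and> t < 1 \<and> (1 - t) *\<^sub>R x1 + t *\<^sub>R x2 \<in> F
        \<longrightarrow> x1 \<in> F \<and> x2 \<in> F)"

definition Jmap :: "'b::real_normed_vector \<Rightarrow> ('b \<Rightarrow> real) set" where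
  "Jmap y = {g. bounded_linear g \<and> onorm g = 1 \<and> g y = norm y}"

definition TEA_pair :: "'a::real_normed_vector \<Rightarrow> 'a \<Rightarrow> bool" where
  "TEA_pair x y \<longleftrightarrow> norm (x + y) = norm x + norm y"

end

(*
  Forward direction: in finite dimension a nonempty convex set F has a point u through
  which every segment [v, u] of F can be prolonged inside F, so u = t v + (1 - t) w with
  w in F and 0 < t < 1.  As T v and T w form a TEA pair, so do t T v and (1 - t) T w, and
  a functional norming their sum T u must norm each summand; hence J(T u) is contained
  in J(T v).  Converse: a norming functional of T u (finite-dimensional Hahn-Banach)
  then norms every nonzero T x, and g (T x + T y) = ||T x|| + ||T y|| gives the TEA
  property.
*)
theory Submission
  imports Defs
begin

lemma fin_dim_aff_independent_finite:
  fixes B :: "'a::real_normed_vector set"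
  assumes "fin_dim_space TYPE('a)" and "\<not> affine_dependent B"
  shows "finite B"
proof (cases "B = {}")
  case False
  then obtain a where a: "a \<in> B" by blast
  obtain S :: "'a set" where S: "finite S" "span S = UNIV"
    using assms(1) unfolding fin_dim_space_def by blast
  have "\<not> dependent ((\<lambda>x. - a + x) ` (B - {a}))"
    using assms(2) affine_dependent_iff_dependent[of a "B - {a}"] a by (simp add: insert_absorb)
  then have "finite ((\<lambda>x. - a + x) ` (B - {a}))"
    using independent_span_bound[OF S(1)] S(2) by blast
  then have "finite (B - {a})" by (rule finite_imageD) (simp add: inj_on_def)
  then show ?thesis by simp
qed simp

lemma centroid_in_convex_hull:
  fixes P :: "'a::real_vector set"
  assumes "finite P" "P \<noteq> {}"
  shows "(\<Sum>p\<in>P. p) /\<^sub>R real (card P) \<in> convex hull P"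
  unfolding convex_hull_finite[OF assms(1)] using assms
  by (intro CollectI exI[of _ "\<lambda>_. 1 / real (card P)"])
     (simp add: scaleR_sum_right divide_inverse_commute)

lemma centroid_between_affine_hull_and_convex_hull:
  fixes P :: "'a::real_vector set"
  assumes P: "finite P" "P \<noteq> {}" and v: "v \<in> affine hull P"
  shows "\<exists>w\<in>convex hull P. \<exists>t. 0 < t \<and> t < 1 \<and>
           (\<Sum>p\<in>P. p) /\<^sub>R real (card P) = t *\<^sub>R v + (1 - t) *\<^sub>R w"
proof -
  define n where "n = real (card P)"
  define u where "u = (\<Sum>p\<in>P. p) /\<^sub>R n"
  have n: "n \<ge> 1" using P n_def by (simp add: Suc_leI card_gt_0_iff)
  obtain l where l1: "sum l P = 1" and lv: "(\<Sum>p\<in>P. l p *\<^sub>R p) = v"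
    using v unfolding affine_hull_finite[OF P(1)] by blast
  define M where "M = 1 + (\<Sum>p\<in>P. \<bar>l p\<bar>)"
  have M: "\<bar>l p\<bar> \<le> M" if "p \<in> P" for p
    using member_le_sum[OF that, of "\<lambda>p. \<bar>l p\<bar>"] P(1) M_def by simp
  have "M \<ge> 1" using M_def sum_nonneg[of P "\<lambda>p. \<bar>l p\<bar>"] by simp
  define e where "e = 1 / (n * M)"
  have e: "e > 0" "e * M = 1 / n" using n \<open>M \<ge> 1\<close> e_def by auto
  \<comment> \<open>w = (1 + e) u - e v has weights m p \<ge> e / n > 0 because e |l p| \<le> 1 / n\<close>
  define m where "m p = (1 + e) / n - e * l p" for p
  define w where "w = (\<Sum>p\<in>P. m p *\<^sub>R p)"
  have "0 \<le> m p" if "p \<in> P" for p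
  proof -
    have "e * l p \<le> e * M" using M[OF that] e(1) by (intro mult_left_mono) auto
    moreover have "1 / n \<le> (1 + e) / n" using n e(1) by (simp add: divide_right_mono)
    ultimately show ?thesis using e(2) m_def by simp
  qed
  moreover have "sum m P = n * ((1 + e) / n) - e * sum l P"
    unfolding m_def n_def by (simp add: sum_subtractf sum_distrib_left)
  then have "sum m P = 1" using n l1 by simp
  ultimately have wP: "w \<in> convex hull P"
    unfolding w_def convex_hull_finite[OF P(1)] by blast
  have w: "w = (1 + e) *\<^sub>R u - e *\<^sub>R v"
    unfolding w_def m_def u_def lv[symmetric]
    by (simp add: scaleR_diff_left sum_subtractf scaleR_sum_right divide_inverse_commute mult.commute)
  define t where "t = e / (1 + e)"
  have "(1 - t) * (1 + e) = 1" "(1 - t) * e = t" using e(1) by (auto simp: t_def field_simps)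
  then have "(1 - t) *\<^sub>R w = u - t *\<^sub>R v"
    unfolding w scaleR_diff_right scaleR_scaleR by simp
  then have "u = t *\<^sub>R v + (1 - t) *\<^sub>R w" by simp
  moreover have "0 < t" "t < 1" using e(1) t_def by auto
  moreover have "(\<Sum>p\<in>P. p) /\<^sub>R real (card P) = u" using u_def n_def by simp
  ultimately show ?thesis using wP by metis
qed

lemma fin_dim_convex_obtain_inner_point:
  fixes F :: "'a::real_normed_vector set"
  assumes "fin_dim_space TYPE('a)" and F: "convex F" "F \<noteq> {}"
  obtains u where "u \<in> F"
    and "\<And>v. v \<in> F \<Longrightarrow> \<exists>w\<in>F. \<exists>t. 0 < t \<and> t < 1 \<and> u = t *\<^sub>R v + (1 - t) *\<^sub>R w"
proof -
  obtain P where P: "P \<subseteq> F" "\<not> affine_dependent P" "affine hull F = affine hull P"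
    using affine_basis_exists[of F] by blast
  have fin: "finite P" using fin_dim_aff_independent_finite[OF assms(1) P(2)] .
  have ne: "P \<noteq> {}" using P(3) F(2) by auto
  have hull: "convex hull P \<subseteq> F" using P(1) F(1) by (rule hull_minimal)
  have aff: "F \<subseteq> affine hull P" using P(3) hull_subset[of F affine] by simp
  show thesis
  proof
    show "(\<Sum>p\<in>P. p) /\<^sub>R real (card P) \<in> F"
      using centroid_in_convex_hull[OF fin ne] hull by blast
  next
    fix v assume "v \<in> F"
    then obtain w t where "w \<in> convex hull P" "0 < t" "t < 1"
      "(\<Sum>p\<in>P. p) /\<^sub>R real (card P) = t *\<^sub>R v + (1 - t) *\<^sub>R w"
      using centroid_between_affine_hull_and_convex_hull[OF fin ne] aff by blast
    then show "\<exists>w\<in>F. \<exists>t. 0 < t \<and> t < 1 \<and> (\<Sum>p\<in>P. p) /\<^sub>R real (card P) = t *\<^sub>R v + (1 - t) *\<^sub>R w"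
      using hull by blast
  qed
qed

lemma TEA_pair_commute: "TEA_pair a b \<longleftrightarrow> TEA_pair b a"
  unfolding TEA_pair_def by (simp add: add.commute)

lemma TEA_pair_scaleR:
  assumes "TEA_pair a b" and "0 \<le> s" and "0 \<le> r"
  shows "TEA_pair (s *\<^sub>R a) (r *\<^sub>R b)"
proof -
  have le: "TEA_pair (s *\<^sub>R a) (r *\<^sub>R b)" if ab: "TEA_pair a b" and "0 \<le> r" "r \<le> s"
    for a b :: 'a and s r :: real
  proof -
    have "s * norm a + s * norm b = norm (s *\<^sub>R (a + b))"
      using ab \<open>0 \<le> r\<close> \<open>r \<le> s\<close> by (simp add: TEA_pair_def distrib_left)
    also have "s *\<^sub>R (a + b) = (s *\<^sub>R a + r *\<^sub>R b) + (s - r) *\<^sub>R b"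
      by (simp add: algebra_simps)
    also have "norm \<dots> \<le> norm (s *\<^sub>R a + r *\<^sub>R b) + (s - r) * norm b"
      using norm_triangle_ineq[of "s *\<^sub>R a + r *\<^sub>R b" "(s - r) *\<^sub>R b"] \<open>r \<le> s\<close> by simp
    finally have "norm (s *\<^sub>R a) + norm (r *\<^sub>R b) \<le> norm (s *\<^sub>R a + r *\<^sub>R b)"
      using \<open>0 \<le> r\<close> \<open>r \<le> s\<close> by (simp add: algebra_simps)
    then show ?thesis
      unfolding TEA_pair_def using norm_triangle_ineq by (intro antisym)
  qed
  show ?thesis
  proof (cases "r \<le> s")
    case True then show ?thesis using le assms by blast
  next
    case False then show ?thesis
      using le[of b a s r] assms TEA_pair_commute by auto
  qed
qed

lemma Jmap_le_norm: "g \<in> Jmap y \<Longrightarrow> g z \<le> norm z"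
  unfolding Jmap_def using onorm[of g z] by auto

lemma Jmap_scaleR:
  assumes "0 < c"
  shows "Jmap (c *\<^sub>R y) = Jmap y"
  unfolding Jmap_def using assms by (auto simp: linear_simps)

lemma TEA_pair_Jmap_add_subset:
  assumes "TEA_pair a b"
  shows "Jmap (a + b) \<subseteq> Jmap a"
proof
  fix g assume g: "g \<in> Jmap (a + b)"
  then interpret g: bounded_linear g unfolding Jmap_def by simp
  have "g a + g b = norm a + norm b"
    using g assms unfolding Jmap_def TEA_pair_def by (simp flip: g.add)
  then have "g a = norm a" using Jmap_le_norm[OF g, of a] Jmap_le_norm[OF g, of b] by linarith
  then show "g \<in> Jmap a" using g unfolding Jmap_def by simp
qed

lemma TEA_pair_if_common_Jmap:
  assumes "g \<in> Jmap a" and "g \<in> Jmap b"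
  shows "TEA_pair a b"
proof -
  have "norm a + norm b = g (a + b)"
    using assms unfolding Jmap_def by (simp add: linear_simps)
  also have "\<dots> \<le> norm (a + b)" using Jmap_le_norm[OF assms(1)] .
  finally show ?thesis unfolding TEA_pair_def using norm_triangle_ineq by (intro antisym)
qed

definition norm_dominated_linear_on :: "'a::real_normed_vector set \<Rightarrow> ('a \<Rightarrow> real) \<Rightarrow> bool" where
  "norm_dominated_linear_on W f \<longleftrightarrow> subspace W \<and>
     (\<forall>x\<in>W. \<forall>y\<in>W. f (x + y) = f x + f y) \<and> (\<forall>x\<in>W. \<forall>c. f (c *\<^sub>R x) = c * f x) \<and>
     (\<forall>x\<in>W. f x \<le> norm x)"

lemma norm_dominated_linear_on_insert:
  assumes f: "norm_dominated_linear_on W f" and z: "z \<notin> W"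
    and lower: "\<And>x. x \<in> W \<Longrightarrow> f x - norm (x - z) \<le> c"
    and upper: "\<And>x. x \<in> W \<Longrightarrow> c \<le> norm (x + z) - f x"
  shows "\<exists>h. norm_dominated_linear_on (span (insert z W)) h \<and> (\<forall>x\<in>W. h x = f x) \<and> h z = c"
proof -
  have W: "subspace W" and add: "\<And>x y. x \<in> W \<Longrightarrow> y \<in> W \<Longrightarrow> f (x + y) = f x + f y"
    and scale: "\<And>x a. x \<in> W \<Longrightarrow> f (a *\<^sub>R x) = a * f x" and le: "\<And>x. x \<in> W \<Longrightarrow> f x \<le> norm x"
    using f unfolding norm_dominated_linear_on_def by auto
  have coord_unique: "s = k" if "x - k *\<^sub>R z \<in> W" "x - s *\<^sub>R z \<in> W" for x k s
  proof (rule ccontr)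
    assume "s \<noteq> k"
    have "(k - s) *\<^sub>R z \<in> W" using subspace_diff[OF W that(2,1)] by (simp add: algebra_simps)
    then have "(1 / (k - s)) *\<^sub>R ((k - s) *\<^sub>R z) \<in> W" by (rule subspace_scale[OF W])
    then show False using z \<open>s \<noteq> k\<close> by simp
  qed
  define h where "h x = f (x - (THE k. x - k *\<^sub>R z \<in> W) *\<^sub>R z) + (THE k. x - k *\<^sub>R z \<in> W) * c" for x
  have h: "h x = f (x - k *\<^sub>R z) + k * c" if "x - k *\<^sub>R z \<in> W" for x k
    using the_equality[of "\<lambda>k. x - k *\<^sub>R z \<in> W", OF that coord_unique[OF that]] h_def by simp
  have coord: "\<exists>k. x - k *\<^sub>R z \<in> W" if "x \<in> span (insert z W)" for x
    using that W by (simp add: span_breakdown_eq span_eq_iff[THEN iffD2, OF W])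
  have "h (w + k *\<^sub>R z) \<le> norm (w + k *\<^sub>R z)" if w: "w \<in> W" for w k
  proof -
    have hwk: "h (w + k *\<^sub>R z) = f w + k * c" using h[of "w + k *\<^sub>R z" k] w by simp
    consider "k = 0" | "k > 0" | "k < 0" by linarith
    then show ?thesis
    proof cases
      case 1 then show ?thesis using hwk le[OF w] by simp
    next
      case 2
      have "w /\<^sub>R k \<in> W" using subspace_scale[OF W w] by simp
      then have "k * c \<le> k * (norm (w /\<^sub>R k + z) - f (w /\<^sub>R k))"
        using upper 2 by (simp add: mult_left_mono)
      also have "\<dots> = norm (w + k *\<^sub>R z) - f w"
        using 2 scale[OF w, of "inverse k"] norm_scaleR[of k "w /\<^sub>R k + z"]
        by (simp add: algebra_simps)
      finally show ?thesis using hwk by simp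
    next
      case 3
      have "w /\<^sub>R (- k) \<in> W" using subspace_scale[OF W w, of "inverse (- k)"] by simp
      then have "- k * (f (w /\<^sub>R (- k)) - norm (w /\<^sub>R (- k) - z)) \<le> - k * c"
        using lower 3 by (simp add: mult_left_mono)
      moreover have "- k * (f (w /\<^sub>R (- k)) - norm (w /\<^sub>R (- k) - z)) = f w - norm (w + k *\<^sub>R z)"
        using 3 scale[OF w, of "inverse (- k)"] norm_scaleR[of "- k" "w /\<^sub>R (- k) - z"]
        by (simp add: algebra_simps)
      ultimately show ?thesis using hwk by simp
    qed
  qed
  then have "h x \<le> norm x" if "x \<in> span (insert z W)" for x
    using coord[OF that] by (metis diff_add_cancel)
  moreover have "h (x + y) = h x + h y" if x: "x \<in> span (insert z W)" and y: "y \<in> span (insert z W)" for x y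
  proof -
    obtain k l where k: "x - k *\<^sub>R z \<in> W" and l: "y - l *\<^sub>R z \<in> W"
      using coord[OF x] coord[OF y] by blast
    have "(x + y) - (k + l) *\<^sub>R z = (x - k *\<^sub>R z) + (y - l *\<^sub>R z)" by (simp add: algebra_simps)
    then show ?thesis
      using h[OF k] h[OF l] h[of "x + y" "k + l"] add[OF k l] subspace_add[OF W k l]
      by (simp add: algebra_simps)
  qed
  moreover have "h (a *\<^sub>R x) = a * h x" if x: "x \<in> span (insert z W)" for x a
  proof -
    obtain k where k: "x - k *\<^sub>R z \<in> W" using coord[OF x] by blast
    have "a *\<^sub>R x - (a * k) *\<^sub>R z = a *\<^sub>R (x - k *\<^sub>R z)" by (simp add: algebra_simps)
    then show ?thesis
      using h[OF k] h[of "a *\<^sub>R x" "a * k"] scale[OF k] subspace_scale[OF W k]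
      by (simp add: algebra_simps)
  qed
  moreover have "h x = f x" if "x \<in> W" for x using h[of x 0] that by simp
  moreover have "h z = c" using h[of z 1] subspace_0[OF W] scale[OF subspace_0[OF W], of 0] by simp
  ultimately show ?thesis
    unfolding norm_dominated_linear_on_def by (intro exI[of _ h]) (auto simp: subspace_span)
qed

lemma norm_dominated_linear_on_extend_insert:
  assumes f: "norm_dominated_linear_on W f"
  shows "\<exists>h. norm_dominated_linear_on (span (insert z W)) h \<and> (\<forall>x\<in>W. h x = f x)"
proof (cases "z \<in> W")
  case True
  then have "span (insert z W) = W"
    using f by (simp add: norm_dominated_linear_on_def insert_absorb)
  then show ?thesis using f by auto
next
  case False
  have W: "subspace W" using f unfolding norm_dominated_linear_on_def by blast
  have bound: "f x - norm (x - z) \<le> norm (y + z) - f y" if x: "x \<in> W" and y: "y \<in> W" for x y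
  proof -
    have "f x + f y \<le> norm (x + y)"
      using f x y subspace_add[OF W x y] unfolding norm_dominated_linear_on_def by metis
    also have "\<dots> \<le> norm (x - z) + norm (y + z)"
      using norm_triangle_ineq[of "x - z" "y + z"] by simp
    finally show ?thesis by simp
  qed
  \<comment> \<open>every lower constraint on f z lies below every upper one, so their supremum is admissible\<close>
  define c where "c = (SUP x\<in>W. f x - norm (x - z))"
  have "bdd_above ((\<lambda>x. f x - norm (x - z)) ` W)"
    using bound[OF _ subspace_0[OF W]] by (rule bdd_aboveI2)
  then have "f x - norm (x - z) \<le> c" if "x \<in> W" for x
    unfolding c_def using that by (rule cSUP_upper2) simp
  moreover have "c \<le> norm (y + z) - f y" if "y \<in> W" for y
    unfolding c_def using subspace_0[OF W] bound[OF _ that] by (intro cSUP_least) auto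
  ultimately show ?thesis using norm_dominated_linear_on_insert[OF f False] by blast
qed

lemma norm_dominated_linear_on_extend_finite:
  assumes "finite S" and "norm_dominated_linear_on W f"
  shows "\<exists>h. norm_dominated_linear_on (span (S \<union> W)) h \<and> (\<forall>x\<in>W. h x = f x)"
  using assms
proof (induction S rule: finite_induct)
  case empty
  then have "subspace W" unfolding norm_dominated_linear_on_def by simp
  with empty.prems show ?case by (auto simp: span_eq_iff[THEN iffD2])
next
  case (insert z S)
  obtain g where g: "norm_dominated_linear_on (span (S \<union> W)) g" "\<forall>x\<in>W. g x = f x"
    using insert.IH insert.prems by blast
  obtain h where h: "norm_dominated_linear_on (span (insert z (span (S \<union> W)))) h"
    "\<forall>x\<in>span (S \<union> W). h x = g x"
    using norm_dominated_linear_on_extend_insert[OF g(1)] by blast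
  have "span (insert z (span (S \<union> W))) = span (insert z S \<union> W)"
    by (simp add: span_insert span_span)
  moreover have "\<forall>x\<in>W. h x = f x" using g(2) h(2) span_superset[of "S \<union> W"] by auto
  ultimately show ?case using h(1) by auto
qed

lemma Jmap_nonempty:
  fixes y :: "'a::real_normed_vector"
  assumes "fin_dim_space TYPE('a)" and "y \<noteq> 0"
  shows "Jmap y \<noteq> {}"
proof -
  obtain S :: "'a set" where S: "finite S" "span S = UNIV"
    using assms(1) unfolding fin_dim_space_def by blast
  have "norm_dominated_linear_on {0} (\<lambda>_. 0)"
    unfolding norm_dominated_linear_on_def by simp
  then obtain g where g: "norm_dominated_linear_on (span {y, 0}) g" "g y = norm y"
    using norm_dominated_linear_on_insert[of "{0}" "\<lambda>_. 0" y "norm y"] assms(2) by auto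
  then obtain h where h: "norm_dominated_linear_on (span (S \<union> span {y, 0})) h"
    "\<forall>x\<in>span {y, 0}. h x = g x"
    using norm_dominated_linear_on_extend_finite[OF S(1)] by blast
  have "span (S \<union> span {y, 0}) = UNIV" using S(2) span_mono[of S "S \<union> span {y, 0}"] by auto
  then have add: "\<And>a b. h (a + b) = h a + h b" and scale: "\<And>a r. h (r *\<^sub>R a) = r * h a"
    and le: "\<And>a. h a \<le> norm a"
    using h(1) unfolding norm_dominated_linear_on_def by auto
  have hy: "h y = norm y" using h(2) g(2) span_base[of y "{y, 0}"] by simp
  have habs: "norm (h a) \<le> norm a" for a
    using le[of a] le[of "- a"] scale[of "- 1" a] by simp
  have "bounded_linear h"
    by (rule bounded_linear_intro[where K = 1]) (use add scale habs in auto)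
  moreover have "onorm h \<le> 1" using habs by (intro onorm_bound) auto
  moreover have "norm y \<le> onorm h * norm y" using onorm[OF \<open>bounded_linear h\<close>, of y] hy by simp
  then have "1 \<le> onorm h" using assms(2) by simp
  ultimately have "h \<in> Jmap y" using hy unfolding Jmap_def by simp
  then show ?thesis by blast
qed

lemma Jmap_subset_Jmap_zero: "Jmap y \<subseteq> Jmap 0"
  unfolding Jmap_def by (auto intro: linear_0 bounded_linear.linear)

lemma TEA_pair_if_Jmap_subsets:
  fixes a :: "'a::real_normed_vector"
  assumes "fin_dim_space TYPE('a)" and "a \<noteq> 0"
    and "Jmap a \<subseteq> Jmap b" and "Jmap a \<subseteq> Jmap c"
  shows "TEA_pair b c"
  using Jmap_nonempty[OF assms(1,2)] assms(3,4) TEA_pair_if_common_Jmap by blast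

lemma TEA_preserving_imp_Jmap_minimal:
  fixes T :: "'a::real_normed_vector \<Rightarrow> 'b::real_normed_vector"
  assumes "fin_dim_space TYPE('a)" and T: "linear T" and F: "convex F" "v\<^sub>1 \<in> F" "T v\<^sub>1 \<noteq> 0"
    and TEA: "\<And>x y. x \<in> F \<Longrightarrow> y \<in> F \<Longrightarrow> TEA_pair (T x) (T y)"
  shows "\<exists>u\<in>F. T u \<noteq> 0 \<and> (\<forall>v\<in>F. Jmap (T u) \<subseteq> Jmap (T v))"
proof -
  obtain u where u: "u \<in> F"
    and seg: "\<And>v. v \<in> F \<Longrightarrow> \<exists>w\<in>F. \<exists>t. 0 < t \<and> t < 1 \<and> u = t *\<^sub>R v + (1 - t) *\<^sub>R w"
    using fin_dim_convex_obtain_inner_point[OF assms(1) F(1)] F(2) by blast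
  have key: "\<exists>t>0. t * norm (T v) \<le> norm (T u) \<and> Jmap (T u) \<subseteq> Jmap (T v)" if v: "v \<in> F" for v
  proof -
    obtain w t where w: "w \<in> F" and t: "0 < t" "t < 1" and "u = t *\<^sub>R v + (1 - t) *\<^sub>R w"
      using seg[OF v] by blast
    then have Tu: "T u = t *\<^sub>R T v + (1 - t) *\<^sub>R T w" using T by (simp add: linear_add linear_scale)
    have tea: "TEA_pair (t *\<^sub>R T v) ((1 - t) *\<^sub>R T w)"
      using TEA_pair_scaleR[OF TEA[OF v w]] t by simp
    then have "norm (T u) = t * norm (T v) + (1 - t) * norm (T w)"
      unfolding Tu TEA_pair_def using t by simp
    then have "t * norm (T v) \<le> norm (T u)" using t by simp
    moreover have "Jmap (T u) \<subseteq> Jmap (t *\<^sub>R T v)" using TEA_pair_Jmap_add_subset[OF tea] Tu by simp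
    then have "Jmap (T u) \<subseteq> Jmap (T v)" unfolding Jmap_scaleR[OF t(1)] .
    ultimately show ?thesis using t by blast
  qed
  obtain t where "0 < t" "t * norm (T v\<^sub>1) \<le> norm (T u)" using key[OF F(2)] by blast
  then have "T u \<noteq> 0" using F(3) by (auto simp: mult_le_0_iff)
  then show ?thesis using u key by blast
qed

theorem mainTheorem12:
  fixes T :: "'a::real_normed_vector \<Rightarrow> 'b::real_normed_vector"
    and F :: "'a set"
  assumes "fin_dim_space TYPE('a)" and "fin_dim_space TYPE('b)"
    and "bounded_linear T"
    and "face_of_ball F"
    and "T ` F \<noteq> {0}"
  shows "(\<forall>x\<in>F. \<forall>y\<in>F. TEA_pair (T x) (T y)) \<longleftrightarrow>
         (\<exists>u\<in>F. T u \<noteq> 0 \<and> (\<forall>v\<in>F. T v \<noteq> 0 \<longrightarrow> Jmap (T u) \<subseteq> Jmap (T v)))"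
proof
  have "convex F" "F \<noteq> {}" using assms(4) unfolding face_of_ball_def by auto
  then have "T ` F = {0}" if "\<forall>v\<in>F. T v = 0" using that by auto
  then obtain v\<^sub>1 where "v\<^sub>1 \<in> F" "T v\<^sub>1 \<noteq> 0" using assms(5) by blast
  moreover assume "\<forall>x\<in>F. \<forall>y\<in>F. TEA_pair (T x) (T y)"
  ultimately show "\<exists>u\<in>F. T u \<noteq> 0 \<and> (\<forall>v\<in>F. T v \<noteq> 0 \<longrightarrow> Jmap (T u) \<subseteq> Jmap (T v))"
    using TEA_preserving_imp_Jmap_minimal[OF assms(1) bounded_linear.linear[OF assms(3)] \<open>convex F\<close>]
    by blast
next
  assume "\<exists>u\<in>F. T u \<noteq> 0 \<and> (\<forall>v\<in>F. T v \<noteq> 0 \<longrightarrow> Jmap (T u) \<subseteq> Jmap (T v))"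
  then obtain u where u: "T u \<noteq> 0" and J: "\<And>v. v \<in> F \<Longrightarrow> T v \<noteq> 0 \<Longrightarrow> Jmap (T u) \<subseteq> Jmap (T v)"
    by blast
  have "Jmap (T u) \<subseteq> Jmap (T v)" if "v \<in> F" for v
    using J[OF that] Jmap_subset_Jmap_zero[of "T u"] by (cases "T v = 0") auto
  then show "\<forall>x\<in>F. \<forall>y\<in>F. TEA_pair (T x) (T y)"
    using TEA_pair_if_Jmap_subsets[OF assms(2) u] by blast
qed

end
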